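(* Let $\xi\in\Xi^*_{T1}\cup\Xi^*_{T2}$. Then $\xi$ is a product correlation plan, i.e. $\xi[\sigma_{T1},\sigma_{T2}]=\xi[\sigma_{T1},\varnothing]\cdot\xi[\varnothing,\sigma_{T2}]$ for all $(\sigma_{T1},\sigma_{T2})\in\Sigma_{T1}\bowtie\Sigma_{T2}$.
   Context: A finite extensive-form game is played on a tree; each internal node belongs to one of the players $T1,T2,O$ or to chance. The nodes of player $i$ are partitioned into information sets $\mathcal I_i$; all nodes of $I\in\mathcal I_i$ share the action set $A_I$. Perfect recall is assumed. The sequences of player $i$ are $\Sigma_i=\{(I,a):I\in\mathcal I_i,a\in A_I\}\cup\{\varnothing\}$. For an information set $I$ of player $i$, $\sigma(I)$ denotes the last pair $(I',a')$ of player $i$ on the root-to-$I$ path, or $\varnothing$ if $i$ does not act before $I$. Two information sets $I_i\in\mathcal I_i$, $I_j\in\mathcal I_j$ are connected ($I_i\rightleftharpoons I_j$) if there exist $v\in I_i$, $w\in I_j$ such that the root-to-$v$ path passes through $w$ or vice versa. A pair $(\sigma_i,\sigma_j)$ is relevant ($\sigma_i\bowtie\sigma_j$) if one of them is $\varnothing$ or $\sigma_i=(I_i,a_i)$, $\sigma_j=(I_j,a_j)$ with $I_i\rightleftharpoons I_j$; $\Sigma_{T1}\bowtie\Sigma_{T2}$ is the set of relevant pairs. Similarly $\sigma_i\bowtie I_j$ if $\sigma_i=\varnothing$ or $\sigma_i=(I_i,a_i)$ with $I_i\rightleftharpoons I_j$. The von Stengel–Forges polytope $\mathcal V_T$ is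 the set of nonnegative vectors $\xi$ indexed by relevant pairs with: $\xi[\varnothing,\varnothing]=1$; $\sum_{a\in A_{I}}\xi[(I,a),\sigma_{T2}]=\xi[\sigma(I),\sigma_{T2}]$ for all $I\in\mathcal I_{T1}$, $\sigma_{T2}\in\Sigma_{T2}$ with $I\bowtie\sigma_{T2}$; $\sum_{b\in A_{J}}\xi[\sigma_{T1},(J,b)]=\xi[\sigma_{T1},\sigma(J)]$ for all $J\in\mathcal I_{T2}$, $\sigma_{T1}\in\Sigma_{T1}$ with $\sigma_{T1}\bowtie J$. The semi-randomized correlation plans are $\Xi^*_{T1}=\{\xi\in\mathcal V_T:\xi[\varnothing,\sigma_{T2}]\in\{0,1\}\ \forall\sigma_{T2}\in\Sigma_{T2}\}$ and $\Xi^*_{T2}=\{\xi\in\mathcal V_T:\xi[\sigma_{T1},\varnothing]\in\{0,1\}\ \forall\sigma_{T1}\in\Sigma_{T1}\}$. *)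

theory Defs
  imports Complex_Main "HOL-Library.Sublist"
begin

text \<open>Game trees: a node is the list of actions from the root (its history). Every internal node h
  carries an information-set label lab h; the owner of a label is a player
  (T1, T2, O) or chance. A I is the action set of information set I.\<close>

datatype player = T1 | T2 | O | Chance

definition internal :: "'a list set \<Rightarrow> 'a list \<Rightarrow> bool" where
  "internal H h \<longleftrightarrow> h \<in> H \<and> (\<exists>a. h @ [a] \<in> H)"

definition own_seq :: "('a list \<Rightarrow> 'i) \<Rightarrow> ('i \<Rightarrow> player) \<Rightarrow> player \<Rightarrow> 'a list \<Rightarrow> ('i \<times> 'a) list" where
  "own_seq lab owner i h =
     [(lab (take k h), h ! k). k \<leftarrow> [0..<length h], owner (lab (take k h)) = i]"

definition efg :: "'a list set \<Rightarrow> ('a list \<Rightarrow> 'i) \<Rightarrow> ('i \<Rightarrow> player) \<Rightarrow> ('i \<Rightarrow> 'a set) \<Rightarrow> bool" where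
  "efg H lab owner A \<longleftrightarrow>
     finite H \<and> [] \<in> H \<and>
     (\<forall>h a. h @ [a] \<in> H \<longrightarrow> h \<in> H) \<and>
     (\<forall>h. internal H h \<and> owner (lab h) \<noteq> Chance \<longrightarrow> A (lab h) = {a. h @ [a] \<in> H}) \<and>
     (\<forall>h h'. internal H h \<and> internal H h' \<and> lab h = lab h' \<and> owner (lab h) \<noteq> Chance \<longrightarrow>
        own_seq lab owner (owner (lab h)) h = own_seq lab owner (owner (lab h)) h')"

definition infosets :: "'a list set \<Rightarrow> ('a list \<Rightarrow> 'i) \<Rightarrow> ('i \<Rightarrow> player) \<Rightarrow> player \<Rightarrow> 'i set" where
  "infosets H lab owner i = {I. \<exists>h. internal H h \<and> lab h = I \<and> owner I = i}"

text \<open>Sequences: None is the empty sequence.\<close>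
definition seqs :: "'a list set \<Rightarrow> ('a list \<Rightarrow> 'i) \<Rightarrow> ('i \<Rightarrow> player) \<Rightarrow> ('i \<Rightarrow> 'a set) \<Rightarrow> player
    \<Rightarrow> ('i \<times> 'a) option set" where
  "seqs H lab owner A i = {None} \<union> {Some (I, a) | I a. I \<in> infosets H lab owner i \<and> a \<in> A I}"

text \<open>sigma(I): last own (infoset, action) pair before I (well defined by perfect recall).\<close>
definition parent_seq :: "'a list set \<Rightarrow> ('a list \<Rightarrow> 'i) \<Rightarrow> ('i \<Rightarrow> player) \<Rightarrow> 'i \<Rightarrow> ('i \<times> 'a) option" where
  "parent_seq H lab owner I =
     (let h = (SOME h. internal H h \<and> lab h = I); s = own_seq lab owner (owner I) h
      in if s = [] then None else Some (last s))"

definition connected :: "'a list set \<Rightarrow> ('a list \<Rightarrow> 'i) \<Rightarrow> 'i \<Rightarrow> 'i \<Rightarrow> bool" where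
  "connected H lab I J \<longleftrightarrow>
     (\<exists>v w. internal H v \<and> internal H w \<and> lab v = I \<and> lab w = J \<and> (prefix w v \<or> prefix v w))"

definition relevant :: "'a list set \<Rightarrow> ('a list \<Rightarrow> 'i) \<Rightarrow> ('i \<times> 'a) option \<Rightarrow> ('i \<times> 'a) option \<Rightarrow> bool" where
  "relevant H lab s1 s2 \<longleftrightarrow>
     s1 = None \<or> s2 = None \<or> (\<exists>I a J b. s1 = Some (I, a) \<and> s2 = Some (J, b) \<and> connected H lab I J)"

definition relevant_si :: "'a list set \<Rightarrow> ('a list \<Rightarrow> 'i) \<Rightarrow> ('i \<times> 'a) option \<Rightarrow> 'i \<Rightarrow> bool" where
  "relevant_si H lab s J \<longleftrightarrow> s = None \<or> (\<exists>I a. s = Some (I, a) \<and> connected H lab I J)"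

definition relevant_pairs :: "'a list set \<Rightarrow> ('a list \<Rightarrow> 'i) \<Rightarrow> ('i \<Rightarrow> player) \<Rightarrow> ('i \<Rightarrow> 'a set)
    \<Rightarrow> (('i \<times> 'a) option \<times> ('i \<times> 'a) option) set" where
  "relevant_pairs H lab owner A =
     {(s1, s2). s1 \<in> seqs H lab owner A T1 \<and> s2 \<in> seqs H lab owner A T2 \<and> relevant H lab s1 s2}"

text \<open>The von Stengel--Forges polytope. A vector indexed by relevant pairs is represented
  by a function on all pairs of sequences; only its values on relevant pairs matter.\<close>
definition vsf_polytope :: "'a list set \<Rightarrow> ('a list \<Rightarrow> 'i) \<Rightarrow> ('i \<Rightarrow> player) \<Rightarrow> ('i \<Rightarrow> 'a set)
    \<Rightarrow> (('i \<times> 'a) option \<Rightarrow> ('i \<times> 'a) option \<Rightarrow> real) set" where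
  "vsf_polytope H lab owner A = {\<xi>.
     (\<forall>(s1, s2) \<in> relevant_pairs H lab owner A. \<xi> s1 s2 \<ge> 0) \<and>
     \<xi> None None = 1 \<and>
     (\<forall>I \<in> infosets H lab owner T1. \<forall>s2 \<in> seqs H lab owner A T2. relevant_si H lab s2 I \<longrightarrow>
        (\<Sum>a\<in>A I. \<xi> (Some (I, a)) s2) = \<xi> (parent_seq H lab owner I) s2) \<and>
     (\<forall>J \<in> infosets H lab owner T2. \<forall>s1 \<in> seqs H lab owner A T1. relevant_si H lab s1 J \<longrightarrow>
        (\<Sum>b\<in>A J. \<xi> s1 (Some (J, b))) = \<xi> s1 (parent_seq H lab owner J))}"

definition semi_T1 where
  "semi_T1 H lab owner A = {\<xi> \<in> vsf_polytope H lab owner A.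
     \<forall>s2 \<in> seqs H lab owner A T2. \<xi> None s2 \<in> {0, 1}}"

definition semi_T2 where
  "semi_T2 H lab owner A = {\<xi> \<in> vsf_polytope H lab owner A.
     \<forall>s1 \<in> seqs H lab owner A T1. \<xi> s1 None \<in> {0, 1}}"

end

theory Submission
  imports Defs
begin

text \<open>Write \<open>x \<in> \<Xi>\<^sup>*\<^sub>T\<^sub>1\<close>; the case \<open>\<Xi>\<^sup>*\<^sub>T\<^sub>2\<close> is the same after transposing \<open>x\<close>.
  Summing the consistency constraints of T1 upwards along T1's sequence tree, together with
  nonnegativity, gives \<open>x[\<sigma>\<^sub>1,\<sigma>\<^sub>2] \<le> x[\<varnothing>,\<sigma>\<^sub>2]\<close>. Now induct on the depth of \<open>\<sigma>\<^sub>2 = (J,b)\<close>.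
  If \<open>x[\<varnothing>,\<sigma>\<^sub>2] = 0\<close> then \<open>x[\<sigma>\<^sub>1,\<sigma>\<^sub>2] = 0\<close>. If \<open>x[\<varnothing>,\<sigma>\<^sub>2] = 1\<close>, then the parent
  \<open>\<sigma>(J)\<close> also has marginal 1, all siblings \<open>(J,b')\<close> have marginal 0 and hence vanish
  against \<open>\<sigma>\<^sub>1\<close>, so the consistency constraint of T2 at \<open>J\<close> gives
  \<open>x[\<sigma>\<^sub>1,\<sigma>\<^sub>2] = x[\<sigma>\<^sub>1,\<sigma>(J)]\<close>, and the induction hypothesis applies to \<open>\<sigma>(J)\<close>, which is still
  relevant to \<open>\<sigma>\<^sub>1\<close>.\<close>

lemma own_seq_snoc:
  "own_seq lab owner i (h @ [a]) =
     own_seq lab owner i h @ (if owner (lab h) = i then [(lab h, a)] else [])"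
proof -
  have "[(lab (take k (h @ [a])), (h @ [a]) ! k). k \<leftarrow> [0..<length h], owner (lab (take k (h @ [a]))) = i]
      = own_seq lab owner i h"
    unfolding own_seq_def by (rule arg_cong[where f = concat], rule map_cong) (auto simp: nth_append)
  then show ?thesis
    by (simp add: own_seq_def)
qed

lemma own_seq_memE:
  assumes "(I, a) \<in> set (own_seq lab owner i h)"
  obtains u where "prefix (u @ [a]) h" "lab u = I" "owner I = i"
    "length (own_seq lab owner i u) < length (own_seq lab owner i h)"
  using assms
proof (induction h arbitrary: thesis rule: rev_induct)
  case Nil
  then show ?case by (simp add: own_seq_def)
next
  case (snoc c h)
  show ?case
  proof (cases "(I, a) \<in> set (own_seq lab owner i h)")
    case True
    then obtain u where "prefix (u @ [a]) h" "lab u = I" "owner I = i"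
      "length (own_seq lab owner i u) < length (own_seq lab owner i h)"
      using snoc.IH by blast
    then show ?thesis
      by (intro snoc.prems(1)[of u]) (auto simp: own_seq_snoc intro: prefix_order.trans)
  next
    case False
    then have "lab h = I" "c = a" "owner I = i"
      using snoc.prems(2) by (auto simp: own_seq_snoc split: if_splits)
    then show ?thesis
      by (intro snoc.prems(1)[of h]) (auto simp: own_seq_snoc)
  qed
qed

lemma connected_commute: "connected H lab I J \<longleftrightarrow> connected H lab J I"
  unfolding connected_def by blast

lemma relevant_commute: "relevant H lab s t \<longleftrightarrow> relevant H lab t s"
  unfolding relevant_def connected_def by blast

lemma relevant_si_if_relevant: "relevant H lab (Some (I, a)) t \<Longrightarrow> relevant_si H lab t I"
  unfolding relevant_def relevant_si_def by (auto simp: connected_commute)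

locale game =
  fixes H :: "'a list set" and lab :: "'a list \<Rightarrow> 'i" and owner :: "'i \<Rightarrow> player"
    and A :: "'i \<Rightarrow> 'a set"
  assumes efg: "efg H lab owner A"
begin

lemma prefix_closed: "h \<in> H \<Longrightarrow> prefix u h \<Longrightarrow> u \<in> H"
proof (induction h rule: rev_induct)
  case (snoc a h)
  then show ?case
    using efg unfolding efg_def by (auto simp: prefix_snoc)
qed simp

lemma internal_if_prefix_snoc: "h \<in> H \<Longrightarrow> prefix (u @ [a]) h \<Longrightarrow> internal H u \<and> u @ [a] \<in> H"
  using prefix_closed efg unfolding internal_def efg_def by blast

lemma actions_eq_children: "internal H h \<Longrightarrow> owner (lab h) \<noteq> Chance \<Longrightarrow> A (lab h) = {a. h @ [a] \<in> H}"
  using efg unfolding efg_def by blast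

lemma perfect_recall:
  "internal H v \<Longrightarrow> internal H w \<Longrightarrow> lab v = lab w \<Longrightarrow> owner (lab v) \<noteq> Chance \<Longrightarrow>
     own_seq lab owner (owner (lab v)) v = own_seq lab owner (owner (lab v)) w"
  using efg unfolding efg_def by blast

lemma finite_actions:
  assumes "I \<in> infosets H lab owner i" "i \<noteq> Chance"
  shows "finite (A I)"
proof -
  obtain h where h: "internal H h" "lab h = I" "owner I = i"
    using assms(1) unfolding infosets_def by blast
  then have "A I \<subseteq> last ` H"
    using actions_eq_children[of h] assms(2) by (auto intro: rev_image_eqI)
  moreover have "finite H"
    using efg unfolding efg_def by blast
  ultimately show ?thesis
    by (meson finite_imageI finite_subset)
qed

text \<open>The node from which \<^const>\<open>parent_seq\<close> reads off \<open>\<sigma>(I)\<close>; by perfect recall any node of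
  \<open>I\<close> would give the same sequence.\<close>

definition rep_node :: "'i \<Rightarrow> 'a list" where
  "rep_node I = (SOME h. internal H h \<and> lab h = I)"

lemma rep_node:
  assumes "I \<in> infosets H lab owner i"
  shows "internal H (rep_node I)" "lab (rep_node I) = I" "owner I = i"
proof -
  obtain h where "internal H h" "lab h = I" "owner I = i"
    using assms unfolding infosets_def by blast
  then show "internal H (rep_node I)" "lab (rep_node I) = I" "owner I = i"
    unfolding rep_node_def by (metis (mono_tags, lifting) someI)+
qed

definition seq_depth :: "('i \<times> 'a) option \<Rightarrow> nat" where
  "seq_depth s = (case s of None \<Rightarrow> 0
     | Some (I, a) \<Rightarrow> Suc (length (own_seq lab owner (owner I) (rep_node I))))"

lemma parent_seq_SomeE:
  assumes I: "I \<in> infosets H lab owner i" "i \<noteq> Chance"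
    and par: "parent_seq H lab owner I = Some (I', a')"
    and v: "internal H v" "lab v = I"
  obtains u where "prefix (u @ [a']) v" "internal H u" "u @ [a'] \<in> H" "lab u = I'" "owner I' = i"
    "length (own_seq lab owner i u) < length (own_seq lab owner i v)"
proof -
  have "own_seq lab owner i (rep_node I) = own_seq lab owner i v"
    using perfect_recall[of "rep_node I" v] rep_node[OF I(1)] I(2) v by simp
  moreover have "(I', a') \<in> set (own_seq lab owner i (rep_node I))"
    using par rep_node(3)[OF I(1)]
    unfolding parent_seq_def rep_node_def[symmetric] Let_def
    by (metis last_in_set option.distinct(1) option.inject)
  ultimately obtain u where "prefix (u @ [a']) v" "lab u = I'" "owner I' = i"
    "length (own_seq lab owner i u) < length (own_seq lab owner i v)"
    by (metis own_seq_memE)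
  moreover have "internal H u \<and> u @ [a'] \<in> H"
    using internal_if_prefix_snoc calculation(1) v(1) unfolding internal_def by blast
  ultimately show ?thesis
    using that by blast
qed

lemma parent_seq_in_seqs:
  assumes "I \<in> infosets H lab owner i" "i \<noteq> Chance"
  shows "parent_seq H lab owner I \<in> seqs H lab owner A i"
proof (cases "parent_seq H lab owner I")
  case (Some p)
  obtain I' a' where p: "p = (I', a')" by (cases p)
  obtain u where u: "internal H u" "u @ [a'] \<in> H" "lab u = I'" "owner I' = i"
    using parent_seq_SomeE[OF assms Some[unfolded p] rep_node(1,2)[OF assms(1)]] by blast
  then have "I' \<in> infosets H lab owner i" "a' \<in> A I'"
    using actions_eq_children[OF u(1)] assms(2) unfolding infosets_def by auto
  then show ?thesis
    using Some p unfolding seqs_def by blast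
qed (simp add: seqs_def)

lemma seq_depth_parent_seq_less:
  assumes "I \<in> infosets H lab owner i" "i \<noteq> Chance"
  shows "seq_depth (parent_seq H lab owner I) < seq_depth (Some (I, a))"
proof (cases "parent_seq H lab owner I")
  case (Some p)
  obtain I' a' where p: "p = (I', a')" by (cases p)
  obtain u where u: "internal H u" "lab u = I'" "owner I' = i"
    "length (own_seq lab owner i u) < length (own_seq lab owner i (rep_node I))"
    using parent_seq_SomeE[OF assms Some[unfolded p] rep_node(1,2)[OF assms(1)]] by blast
  have "I' \<in> infosets H lab owner i"
    using u unfolding infosets_def by blast
  then have "own_seq lab owner i (rep_node I') = own_seq lab owner i u"
    using perfect_recall[of "rep_node I'" u] rep_node[of I' i] u assms(2) by simp
  then show ?thesis
    using Some p u(3,4) rep_node(3)[OF assms(1)] by (simp add: seq_depth_def)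
qed (simp add: seq_depth_def)

lemma connected_parent_seq:
  assumes "I \<in> infosets H lab owner i" "i \<noteq> Chance"
    and "parent_seq H lab owner I = Some (I', a')" and "connected H lab I J"
  shows "connected H lab I' J"
proof -
  obtain v w where vw: "internal H v" "internal H w" "lab v = I" "lab w = J"
    "prefix w v \<or> prefix v w"
    using assms(4) unfolding connected_def by blast
  obtain u where u: "prefix (u @ [a']) v" "internal H u" "lab u = I'"
    using parent_seq_SomeE[OF assms(1-3) vw(1,3)] by blast
  then have "prefix u v"
    using prefix_order.trans prefixI by blast
  then have "prefix u w \<or> prefix w u"
    using vw(5) prefix_same_cases prefix_order.trans by blast
  then show ?thesis
    using u vw unfolding connected_def by blast
qed

lemma relevant_parent_seq:
  assumes "I \<in> infosets H lab owner i" "i \<noteq> Chance" and "relevant H lab (Some (I, a)) t"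
  shows "relevant H lab (parent_seq H lab owner I) t"
  using assms connected_parent_seq[OF assms(1,2)] unfolding relevant_def
  by (cases "parent_seq H lab owner I") auto

text \<open>The constraints of the polytope with the two players as parameters (\<open>x s t\<close> is indexed by
  a sequence \<open>s\<close> of \<open>i\<close> and a sequence \<open>t\<close> of \<open>j\<close>), so that transposing \<open>x\<close> swaps their roles.\<close>

definition correlation_plan ::
    "player \<Rightarrow> player \<Rightarrow> (('i \<times> 'a) option \<Rightarrow> ('i \<times> 'a) option \<Rightarrow> real) \<Rightarrow> bool" where
  "correlation_plan i j x \<longleftrightarrow>
     x None None = 1 \<and>
     (\<forall>s \<in> seqs H lab owner A i. \<forall>t \<in> seqs H lab owner A j. relevant H lab s t \<longrightarrow> 0 \<le> x s t) \<and>
     (\<forall>I \<in> infosets H lab owner i. \<forall>t \<in> seqs H lab owner A j. relevant_si H lab t I \<longrightarrow>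
        (\<Sum>a\<in>A I. x (Some (I, a)) t) = x (parent_seq H lab owner I) t) \<and>
     (\<forall>J \<in> infosets H lab owner j. \<forall>s \<in> seqs H lab owner A i. relevant_si H lab s J \<longrightarrow>
        (\<Sum>b\<in>A J. x s (Some (J, b))) = x s (parent_seq H lab owner J))"

lemma correlation_plan_transpose:
  "correlation_plan i j x \<Longrightarrow> correlation_plan j i (\<lambda>t s. x s t)"
  unfolding correlation_plan_def by (auto simp: relevant_commute)

lemma vsf_polytope_correlation_plan:
  "\<xi> \<in> vsf_polytope H lab owner A \<Longrightarrow> correlation_plan T1 T2 \<xi>"
  unfolding vsf_polytope_def correlation_plan_def relevant_pairs_def by auto

lemma correlation_plan_nonneg:
  "correlation_plan i j x \<Longrightarrow> s \<in> seqs H lab owner A i \<Longrightarrow> t \<in> seqs H lab owner A j \<Longrightarrow>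
     relevant H lab s t \<Longrightarrow> 0 \<le> x s t"
  unfolding correlation_plan_def by blast

lemma correlation_plan_sum_fst:
  "correlation_plan i j x \<Longrightarrow> I \<in> infosets H lab owner i \<Longrightarrow> t \<in> seqs H lab owner A j \<Longrightarrow>
     relevant_si H lab t I \<Longrightarrow> (\<Sum>a\<in>A I. x (Some (I, a)) t) = x (parent_seq H lab owner I) t"
  unfolding correlation_plan_def by blast

lemma correlation_plan_sum_snd:
  "correlation_plan i j x \<Longrightarrow> J \<in> infosets H lab owner j \<Longrightarrow> s \<in> seqs H lab owner A i \<Longrightarrow>
     relevant_si H lab s J \<Longrightarrow> (\<Sum>b\<in>A J. x s (Some (J, b))) = x s (parent_seq H lab owner J)"
  unfolding correlation_plan_def by blast

lemma correlation_plan_le_marginal: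
  assumes plan: "correlation_plan i j x" and i: "i \<noteq> Chance"
  shows "s \<in> seqs H lab owner A i \<Longrightarrow> t \<in> seqs H lab owner A j \<Longrightarrow> relevant H lab s t \<Longrightarrow>
    x s t \<le> x None t"
proof (induction "seq_depth s" arbitrary: s rule: less_induct)
  case less
  show ?case
  proof (cases s)
    case (Some p)
    obtain I a where s: "s = Some (I, a)" using Some by (cases p) auto
    have I: "I \<in> infosets H lab owner i" and a: "a \<in> A I"
      using less.prems(1) s unfolding seqs_def by auto
    have siblings_nonneg: "0 \<le> x (Some (I, b)) t" if "b \<in> A I" for b
      using correlation_plan_nonneg[OF plan _ less.prems(2)] I that less.prems(3) s
      unfolding relevant_def seqs_def by auto
    have "relevant_si H lab t I"
      using less.prems(3) unfolding s by (rule relevant_si_if_relevant)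
    have "x s t \<le> (\<Sum>b\<in>A I. x (Some (I, b)) t)"
      unfolding s using a finite_actions[OF I i] siblings_nonneg by (intro member_le_sum) auto
    also have "\<dots> = x (parent_seq H lab owner I) t"
      by (rule correlation_plan_sum_fst) fact+
    also have "\<dots> \<le> x None t"
      using less.hyps seq_depth_parent_seq_less[OF I i] parent_seq_in_seqs[OF I i]
        relevant_parent_seq[OF I i] less.prems(2,3) s by blast
    finally show ?thesis .
  qed simp
qed

lemma correlation_plan_zero_marginal:
  assumes "correlation_plan i j x" "i \<noteq> Chance"
    and "s \<in> seqs H lab owner A i" "t \<in> seqs H lab owner A j" "relevant H lab s t"
    and "x None t = 0"
  shows "x s t = 0"
  using correlation_plan_le_marginal[OF assms(1-5)] correlation_plan_nonneg[OF assms(1,3-5)] assms(6)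
  by linarith

lemma correlation_plan_unit_marginal:
  assumes plan: "correlation_plan i j x" and i: "i \<noteq> Chance" and j: "j \<noteq> Chance"
    and binary: "\<And>t. t \<in> seqs H lab owner A j \<Longrightarrow> x None t \<in> {0, 1}"
    and J: "J \<in> infosets H lab owner j" and b: "b \<in> A J"
    and s: "s \<in> seqs H lab owner A i" and rel: "relevant H lab s (Some (J, b))"
    and unit: "x None (Some (J, b)) = 1"
  shows "x None (parent_seq H lab owner J) = 1"
    and "x s (Some (J, b)) = x s (parent_seq H lab owner J)"
proof -
  let ?siblings = "A J - {b}"
  have fin: "finite (A J)"
    by (rule finite_actions[OF J j])
  have seqJ: "Some (J, b') \<in> seqs H lab owner A j" if "b' \<in> A J" for b'
    using J that unfolding seqs_def by blast
  have None_seq: "None \<in> seqs H lab owner A i"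
    unfolding seqs_def by blast
  have rel_si: "relevant_si H lab s J"
    using rel unfolding relevant_def relevant_si_def by blast
  have rel_siblings: "relevant H lab s (Some (J, b'))" for b'
    using rel unfolding relevant_def by blast
  have "x None (parent_seq H lab owner J) = (\<Sum>b'\<in>A J. x None (Some (J, b')))"
    using correlation_plan_sum_snd[OF plan J None_seq] unfolding relevant_si_def by simp
  also have "\<dots> = x None (Some (J, b)) + (\<Sum>b'\<in>?siblings. x None (Some (J, b')))"
    by (rule sum.remove[OF fin b])
  finally have marginal_split:
    "x None (parent_seq H lab owner J) = x None (Some (J, b)) + (\<Sum>b'\<in>?siblings. x None (Some (J, b')))" .
  have "x None (parent_seq H lab owner J) \<le> 1"
    using binary[OF parent_seq_in_seqs[OF J j]] by auto
  moreover have siblings_nonneg: "0 \<le> x None (Some (J, b'))" if "b' \<in> ?siblings" for b'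
    using correlation_plan_nonneg[OF plan None_seq seqJ] that unfolding relevant_def by blast
  moreover have "0 \<le> (\<Sum>b'\<in>?siblings. x None (Some (J, b')))"
    using siblings_nonneg by (rule sum_nonneg)
  ultimately have parent_unit: "x None (parent_seq H lab owner J) = 1"
    and siblings_sum: "(\<Sum>b'\<in>?siblings. x None (Some (J, b'))) = 0"
    using marginal_split unit by linarith+
  then show "x None (parent_seq H lab owner J) = 1"
    by blast
  have "x None (Some (J, b')) = 0" if "b' \<in> ?siblings" for b'
    using siblings_sum sum_nonneg_eq_0_iff[of ?siblings "\<lambda>b'. x None (Some (J, b'))"]
      fin siblings_nonneg that by simp
  then have siblings_zero: "x s (Some (J, b')) = 0" if "b' \<in> ?siblings" for b'
    using that correlation_plan_zero_marginal[OF plan i s seqJ rel_siblings] by simp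
  have "x s (parent_seq H lab owner J) = (\<Sum>b'\<in>A J. x s (Some (J, b')))"
    using correlation_plan_sum_snd[OF plan J s rel_si] by simp
  also have "\<dots> = x s (Some (J, b)) + (\<Sum>b'\<in>?siblings. x s (Some (J, b')))"
    by (rule sum.remove[OF fin b])
  also have "\<dots> = x s (Some (J, b))"
    using siblings_zero by simp
  finally show "x s (Some (J, b)) = x s (parent_seq H lab owner J)"
    by simp
qed

lemma correlation_plan_product:
  assumes plan: "correlation_plan i j x" and i: "i \<noteq> Chance" and j: "j \<noteq> Chance"
    and binary: "\<And>t. t \<in> seqs H lab owner A j \<Longrightarrow> x None t \<in> {0, 1}"
  shows "s \<in> seqs H lab owner A i \<Longrightarrow> t \<in> seqs H lab owner A j \<Longrightarrow> relevant H lab s t \<Longrightarrow>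
    x s t = x s None * x None t"
proof (induction "seq_depth t" arbitrary: t rule: less_induct)
  case less
  show ?case
  proof (cases t)
    case None
    then show ?thesis
      using plan unfolding correlation_plan_def by simp
  next
    case (Some p)
    obtain J b where t: "t = Some (J, b)" using Some by (cases p) auto
    have J: "J \<in> infosets H lab owner j" and b: "b \<in> A J"
      using less.prems(2) t unfolding seqs_def by auto
    consider "x None t = 0" | "x None t = 1"
      using binary[OF less.prems(2)] by blast
    then show ?thesis
    proof cases
      case 1
      then show ?thesis
        using correlation_plan_zero_marginal[OF plan i less.prems] by simp
    next
      case 2
      have "relevant H lab s (parent_seq H lab owner J)"
        using relevant_parent_seq[OF J j, of b s] less.prems(3) t relevant_commute by metis
      then have "x s (parent_seq H lab owner J) = x s None * x None (parent_seq H lab owner J)"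
        using less.hyps seq_depth_parent_seq_less[OF J j] parent_seq_in_seqs[OF J j] less.prems(1) t
        by blast
      then show ?thesis
        using correlation_plan_unit_marginal[OF plan i j binary J b less.prems(1)] less.prems(3) t 2
        by simp
    qed
  qed
qed

end

theorem mainTheorem5:
  fixes H :: "'a list set" and lab :: "'a list \<Rightarrow> 'i" and owner :: "'i \<Rightarrow> player"
    and A :: "'i \<Rightarrow> 'a set" and \<xi> :: "('i \<times> 'a) option \<Rightarrow> ('i \<times> 'a) option \<Rightarrow> real"
  assumes "efg H lab owner A"
    and "\<xi> \<in> semi_T1 H lab owner A \<union> semi_T2 H lab owner A"
  shows "\<forall>(s1, s2) \<in> relevant_pairs H lab owner A. \<xi> s1 s2 = \<xi> s1 None * \<xi> None s2"
proof clarify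
  interpret game H lab owner A
    by (rule game.intro) (rule assms(1))
  fix s1 s2
  assume "(s1, s2) \<in> relevant_pairs H lab owner A"
  then have s1: "s1 \<in> seqs H lab owner A T1" and s2: "s2 \<in> seqs H lab owner A T2"
    and rel: "relevant H lab s1 s2"
    unfolding relevant_pairs_def by auto
  have plan: "correlation_plan T1 T2 \<xi>"
    using assms(2) vsf_polytope_correlation_plan unfolding semi_T1_def semi_T2_def by blast
  show "\<xi> s1 s2 = \<xi> s1 None * \<xi> None s2"
    using assms(2) unfolding semi_T1_def semi_T2_def
  proof (elim UnE CollectE conjE)
    assume "\<forall>t \<in> seqs H lab owner A T2. \<xi> None t \<in> {0, 1}"
    then show ?thesis
      using correlation_plan_product[OF plan] s1 s2 rel by simp
  next
    assume "\<forall>s \<in> seqs H lab owner A T1. \<xi> s None \<in> {0, 1}"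
    moreover have "relevant H lab s2 s1"
      using rel relevant_commute by metis
    ultimately show ?thesis
      using correlation_plan_product[OF correlation_plan_transpose[OF plan]] s1 s2 by simp
  qed
qed

end
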